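(* Let $n\geq 3$ and let $k\in\mathbb{Z}_n$ with $k\neq 0$ and $2k\not\equiv 0\pmod n$. Let $C$ be a subset of the vertex set of $\mathrm{GP}(n,k)$. Then $C$ is a total perfect code in $\mathrm{GP}(n,k)$ if and only if one of the following holds: (i) $n\equiv 0\pmod 3$, $k\not\equiv 0\pmod 3$, and $C=C_j:=\{u_{3i+j},v_{3i+j}\mid i\in\mathbb{Z}_n\}$ for some $j\in\{0,1,2\}$; (ii) $n\equiv 0\pmod 6$, $k\equiv \pm 1\pmod 6$, and $C=C'_j:=\{u_{6i+j},u_{6i+j+1},v_{6i+j+3},v_{6i+j+4}\mid i\in\mathbb{Z}_n\}$ for some $j\in\{0,1,2,3,4,5\}$ (all indices modulo $n$).
   Context: For an integer $n\geq 3$ and a nonzero $k\in\mathbb{Z}_n$, the generalized Petersen graph $\mathrm{GP}(n,k)$ is the simple graph with vertex set $\{u_i,v_i\mid i\in\mathbb{Z}_n\}$ and edges $u_iu_{i+1}$, $u_iv_i$, $v_iv_{i+k}$ for all $i\in\mathbb{Z}_n$ (indices modulo $n$). Standing assumption: $2k\not\equiv 0\pmod n$, so that $\mathrm{GP}(n,k)$ is 3-regular. Congruences of $k$ modulo divisors of $n$ are well defined. A total perfect code in a graph $\Gamma$ is a set $C\subseteq V(\Gamma)$ such that every vertex of $\Gamma$ (whether in $C$ or not) is adjacent to exactly one vertex of $C$. *)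

theory Defs
  imports Main
begin

text \<open>Vertices of GP(n,k): U i = u_i, V i = v_i, with i in {0..<n} representing Z_n.\<close>
datatype gpv = U nat | V nat

definition gp_verts :: "nat \<Rightarrow> gpv set" where
  "gp_verts n = {U i | i. i < n} \<union> {V i | i. i < n}"

definition gp_edge :: "nat \<Rightarrow> nat \<Rightarrow> gpv \<Rightarrow> gpv \<Rightarrow> bool" where
  "gp_edge n k x y \<longleftrightarrow> (\<exists>i<n. (x = U i \<and> y = U ((i + 1) mod n))
                              \<or> (x = U i \<and> y = V i)
                              \<or> (x = V i \<and> y = V ((i + k) mod n)))"

definition gp_adj :: "nat \<Rightarrow> nat \<Rightarrow> gpv \<Rightarrow> gpv \<Rightarrow> bool" where
  "gp_adj n k x y \<longleftrightarrow> gp_edge n k x y \<or> gp_edge n k y x"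

definition total_perfect_code :: "nat \<Rightarrow> nat \<Rightarrow> gpv set \<Rightarrow> bool" where
  "total_perfect_code n k C \<longleftrightarrow> C \<subseteq> gp_verts n \<and>
     (\<forall>x\<in>gp_verts n. card {c \<in> C. gp_adj n k x c} = 1)"

definition code_C :: "nat \<Rightarrow> nat \<Rightarrow> gpv set" where
  "code_C n j = {U ((3*i + j) mod n) | i. i < n} \<union> {V ((3*i + j) mod n) | i. i < n}"

definition code_C' :: "nat \<Rightarrow> nat \<Rightarrow> gpv set" where
  "code_C' n j = {U ((6*i + j) mod n) | i. i < n} \<union> {U ((6*i + j + 1) mod n) | i. i < n}
               \<union> {V ((6*i + j + 3) mod n) | i. i < n} \<union> {V ((6*i + j + 4) mod n) | i. i < n}"

end

theory Submission
  imports Defs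
begin

text \<open>Record membership of \<open>u\<^sub>i\<close> and \<open>v\<^sub>i\<close> in \<open>C\<close> by predicates \<open>a\<close>, \<open>b\<close> on \<open>\<int>\<close>
  of period \<open>n\<close>. Being a total perfect code means that exactly one of \<open>a (x - 1)\<close>,
  \<open>a (x + 1)\<close>, \<open>b x\<close> and exactly one of \<open>a x\<close>, \<open>b (x - k)\<close>, \<open>b (x + k)\<close> holds, for every
  \<open>x\<close>. Chasing these constraints through the positions \<open>x + s + t k\<close> with \<open>-2 \<le> s \<le> 3\<close>,
  \<open>|t| \<le> 2\<close> shows that exactly one of \<open>a x\<close>, \<open>a (x + 2)\<close>, \<open>a (x + 4)\<close> holds. Hence \<open>a\<close>
  has period 6, \<open>b x = a (x + 3)\<close>, and \<open>a\<close> marks one even and one odd residue modulo 6: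
  either a residue class modulo 3 (the codes \<open>C\<^sub>j\<close>) or two consecutive residues modulo 6
  (the codes \<open>C'\<^sub>j\<close>). The period \<open>n\<close> of \<open>a\<close> and the constraint at \<open>v\<^sub>x\<close> then give the
  conditions on \<open>n\<close> and \<open>k\<close>.\<close>

section \<open>Exactly-one constraints on the integers\<close>

definition exactly_one :: "bool \<Rightarrow> bool \<Rightarrow> bool \<Rightarrow> bool" where
  "exactly_one p q r \<longleftrightarrow> (p \<and> \<not> q \<and> \<not> r) \<or> (\<not> p \<and> q \<and> \<not> r) \<or> (\<not> p \<and> \<not> q \<and> r)"

text \<open>Here \<open>a x\<close> and \<open>b x\<close> say whether \<open>u\<^sub>x\<close> and \<open>v\<^sub>x\<close> lie in the code, with the
  indices lifted from \<open>\<int>\<^sub>n\<close> to \<open>\<int>\<close>; the two clauses are the conditions at \<open>u\<^sub>x\<close>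
  and at \<open>v\<^sub>x\<close>.\<close>

definition local_tpc :: "int \<Rightarrow> (int \<Rightarrow> bool) \<Rightarrow> (int \<Rightarrow> bool) \<Rightarrow> bool" where
  "local_tpc k a b \<longleftrightarrow> (\<forall>x. exactly_one (a (x - 1)) (a (x + 1)) (b x)) \<and>
                        (\<forall>x. exactly_one (a x) (b (x - k)) (b (x + k)))"

definition pattern3 :: "nat \<Rightarrow> int \<Rightarrow> bool" where
  "pattern3 j x \<longleftrightarrow> 3 dvd x - int j"

definition pattern6 :: "nat \<Rightarrow> int \<Rightarrow> bool" where
  "pattern6 j x \<longleftrightarrow> 6 dvd x - int j \<or> 6 dvd x - int j - 1"

text \<open>Position \<open>(s, t)\<close> of the grid stands for the index \<open>x + s + t k\<close>. The claim is a
  propositional consequence of the constraints at the cells of a small window (those of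
  \<open>h1\<close> at odd and those of \<open>h2\<close> at even \<open>s + t\<close>), so it is left to a SAT solver.\<close>

lemma grid_window:
  fixes A B :: "int \<Rightarrow> int \<Rightarrow> bool"
  assumes h1: "\<And>s t. exactly_one (A (s - 1) t) (A (s + 1) t) (B s t)"
    and h2: "\<And>s t. exactly_one (A s t) (B s (t - 1)) (B s (t + 1))"
  shows "exactly_one (A 0 0) (A 2 0) (A 4 0)"
proof -
  note f = h1[of "-2" "-1"] h2[of "-2" "0"] h1[of "-2" "1"] h1[of "-1" "-2"] h2[of "-1" "-1"]
    h1[of "-1" "0"] h2[of "-1" "1"] h1[of "-1" "2"] h1[of "0" "-1"] h2[of "0" "0"] h1[of "0" "1"]
    h1[of "1" "-2"] h2[of "1" "-1"] h1[of "1" "0"] h2[of "1" "1"] h1[of "1" "2"] h1[of "2" "-1"]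
    h2[of "2" "0"] h1[of "2" "1"] h1[of "3" "-2"] h2[of "3" "-1"] h1[of "3" "0"] h2[of "3" "1"]
    h1[of "3" "2"]
  from f show ?thesis unfolding exactly_one_def by simp sat
qed

lemma local_tpc_window:
  assumes "local_tpc k a b"
  shows "exactly_one (a x) (a (x + 2)) (a (x + 4))"
proof -
  from assms have h1: "exactly_one (a (y - 1)) (a (y + 1)) (b y)"
    and h2: "exactly_one (a y) (b (y - k)) (b (y + k))" for y
    unfolding local_tpc_def by blast+
  let ?A = "\<lambda>s t. a (x + s + t * k)" and ?B = "\<lambda>s t. b (x + s + t * k)"
  have "exactly_one (?A (s - 1) t) (?A (s + 1) t) (?B s t)" for s t
    using h1[of "x + s + t * k"] by (simp add: algebra_simps)
  moreover have "exactly_one (?A s t) (?B s (t - 1)) (?B s (t + 1))" for s t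
    using h2[of "x + s + t * k"] by (simp add: algebra_simps)
  ultimately show ?thesis
    using grid_window[of ?A ?B] by simp
qed

lemma local_tpc_b_eq:
  assumes "local_tpc k a b"
  shows "b x = a (x + 3)"
proof -
  have "exactly_one (a (x - 1)) (a (x + 1)) (b x)"
    using assms unfolding local_tpc_def by blast
  moreover have "exactly_one (a (x - 1)) (a (x + 1)) (a (x + 3))"
    using local_tpc_window[OF assms, of "x - 1"] by (simp add: algebra_simps)
  ultimately show ?thesis
    unfolding exactly_one_def by blast
qed

lemma periodic_mod:
  fixes f :: "int \<Rightarrow> 'a"
  assumes "\<And>x. f (x + p) = f x"
  shows "f (x mod p) = f x"
proof -
  have "f (y + m * p) = f y" for y m
  proof (induction m rule: int_induct[where k = 0])
    case (step1 i)
    then show ?case using assms[of "y + i * p"] by (simp add: algebra_simps)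
  next
    case (step2 i)
    then show ?case using assms[of "y + (i - 1) * p"] by (simp add: algebra_simps)
  qed simp
  from this[of "x mod p" "x div p"] show ?thesis by simp
qed

lemma window_periodic:
  assumes "\<And>x. exactly_one (a x) (a (x + 2)) (a (x + 4))"
  shows "a (x + 6) = a x"
  using assms[of x] assms[of "x + 2"] unfolding exactly_one_def by (auto simp: add.assoc)

lemma window_classification:
  assumes window: "\<And>x. exactly_one (a x) (a (x + 2)) (a (x + 4))"
  shows "(\<exists>j<3. a = pattern3 j) \<or> (\<exists>j<6. a = pattern6 j)"
proof -
  have a_mod: "a (x mod 6) = a x" for x
    using window_periodic[OF window] by (rule periodic_mod)
  define p :: int where "p = (if a 0 then 0 else if a 2 then 2 else 4)"
  define q :: int where "q = (if a 1 then 1 else if a 3 then 3 else 5)"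
  have p: "p = 0 \<or> p = 2 \<or> p = 4" and q: "q = 1 \<or> q = 3 \<or> q = 5"
    unfolding p_def q_def by simp_all
  have a_even: "a 0 \<longleftrightarrow> p = 0" "a 2 \<longleftrightarrow> p = 2" "a 4 \<longleftrightarrow> p = 4"
    using window[of 0] unfolding p_def exactly_one_def by auto
  have a_odd: "a 1 \<longleftrightarrow> q = 1" "a 3 \<longleftrightarrow> q = 3" "a 5 \<longleftrightarrow> q = 5"
    using window[of 1] unfolding q_def exactly_one_def by auto
  have parity: "p \<noteq> 1" "p \<noteq> 3" "p \<noteq> 5" "q \<noteq> 0" "q \<noteq> 2" "q \<noteq> 4"
    using p q by auto
  have "a x \<longleftrightarrow> x mod 6 = p \<or> x mod 6 = q" for x
  proof -
    have "x mod 6 = 0 \<or> x mod 6 = 1 \<or> x mod 6 = 2 \<or> x mod 6 = 3 \<or> x mod 6 = 4 \<or> x mod 6 = 5"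
      by presburger
    then show ?thesis
      using a_mod[of x] a_even a_odd parity by (elim disjE) auto
  qed
  moreover have "p mod 6 = p" "q mod 6 = q"
    using p q by auto
  ultimately have "a = (\<lambda>x. 6 dvd x - p \<or> 6 dvd x - q)"
    by (metis mod_eq_dvd_iff)
  moreover have "(\<exists>j<3. (\<lambda>x. 6 dvd x - p \<or> 6 dvd x - q) = pattern3 j) \<or>
      (\<exists>j<6. (\<lambda>x. 6 dvd x - p \<or> 6 dvd x - q) = pattern6 j)"
    using p q unfolding fun_eq_iff pattern3_def pattern6_def by presburger
  ultimately show ?thesis
    by simp
qed

lemma local_tpc_pattern3_iff: "local_tpc k (pattern3 j) (pattern3 j) \<longleftrightarrow> \<not> 3 dvd k"
  unfolding local_tpc_def pattern3_def exactly_one_def by presburger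

lemma local_tpc_pattern6_iff:
  "local_tpc k (pattern6 j) (pattern6 (j + 3)) \<longleftrightarrow> 6 dvd k - 1 \<or> 6 dvd k + 1"
  unfolding local_tpc_def pattern6_def exactly_one_def by presburger

lemma periodic_pattern3_iff: "(\<forall>x. pattern3 j (x + n) = pattern3 j x) \<longleftrightarrow> 3 dvd n"
  unfolding pattern3_def by presburger

lemma periodic_pattern6_iff: "(\<forall>x. pattern6 j (x + n) = pattern6 j x) \<longleftrightarrow> 6 dvd n"
  unfolding pattern6_def by presburger

lemma pattern3_shift: "pattern3 j (x + 3) = pattern3 j x"
  unfolding pattern3_def by presburger

lemma pattern6_shift: "pattern6 j (x + 3) = pattern6 (j + 3) x"
  unfolding pattern6_def by presburger

lemma local_tpc_iff:
  fixes a b :: "int \<Rightarrow> bool" and n k :: int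
  assumes periodic: "\<And>x. a (x + n) = a x"
  shows "local_tpc k a b \<longleftrightarrow>
    (3 dvd n \<and> \<not> 3 dvd k \<and> (\<exists>j<3. a = pattern3 j \<and> b = pattern3 j)) \<or>
    (6 dvd n \<and> (6 dvd k - 1 \<or> 6 dvd k + 1) \<and> (\<exists>j<6. a = pattern6 j \<and> b = pattern6 (j + 3)))"
    (is "_ \<longleftrightarrow> ?codes3 \<or> ?codes6")
proof
  assume tpc: "local_tpc k a b"
  have b: "b = (\<lambda>x. a (x + 3))"
    using local_tpc_b_eq[OF tpc] by blast
  from window_classification[OF local_tpc_window[OF tpc]]
  show "?codes3 \<or> ?codes6"
  proof (elim disjE exE conjE)
    fix j assume "j < 3" and a: "a = pattern3 j"
    then have "b = pattern3 j"
      using b by (simp add: pattern3_shift)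
    moreover from tpc have "\<not> 3 dvd k"
      unfolding a \<open>b = pattern3 j\<close> local_tpc_pattern3_iff .
    moreover have "3 dvd n"
      using periodic periodic_pattern3_iff[of j n] unfolding a by blast
    ultimately show ?thesis
      using \<open>j < 3\<close> a by blast
  next
    fix j assume "j < 6" and a: "a = pattern6 j"
    then have "b = pattern6 (j + 3)"
      using b by (simp add: pattern6_shift)
    moreover from tpc have "6 dvd k - 1 \<or> 6 dvd k + 1"
      unfolding a \<open>b = pattern6 (j + 3)\<close> local_tpc_pattern6_iff .
    moreover have "6 dvd n"
      using periodic periodic_pattern6_iff[of j n] unfolding a by blast
    ultimately show ?thesis
      using \<open>j < 6\<close> a by blast
  qed
next
  assume "?codes3 \<or> ?codes6"
  then show "local_tpc k a b"
    by (elim disjE conjE exE) (simp_all add: local_tpc_pattern3_iff local_tpc_pattern6_iff)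
qed

section \<open>Lifting \<open>GP(n,k)\<close> to the integers\<close>

definition cyc_idx :: "nat \<Rightarrow> int \<Rightarrow> nat" where
  "cyc_idx n x = nat (x mod int n)"

lemma cyc_idx_less: "0 < n \<Longrightarrow> cyc_idx n x < n"
  unfolding cyc_idx_def by (simp add: nat_less_iff)

lemma cyc_idx_of_nat: "cyc_idx n (int m) = m mod n"
  unfolding cyc_idx_def by (simp flip: of_nat_mod)

lemma cyc_idx_eq_iff: "0 < n \<Longrightarrow> cyc_idx n x = cyc_idx n y \<longleftrightarrow> x mod int n = y mod int n"
  unfolding cyc_idx_def by (simp add: eq_nat_nat_iff)

lemma cyc_idx_add_int: "0 < n \<Longrightarrow> cyc_idx n (x + int n) = cyc_idx n x"
  unfolding cyc_idx_def by simp

lemma mod_add_eq_cyc_idx_iff: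
  assumes "0 < n" "j < n"
  shows "(j + d) mod n = cyc_idx n x \<longleftrightarrow> j = cyc_idx n (x - int d)"
proof -
  have "(j + d) mod n = cyc_idx n x \<longleftrightarrow> (int j + int d) mod int n = x mod int n"
    using cyc_idx_eq_iff[OF assms(1), of "int j + int d" x] cyc_idx_of_nat[of n "j + d"] by simp
  also have "\<dots> \<longleftrightarrow> int j mod int n = (x - int d) mod int n"
    by (simp only: mod_eq_dvd_iff) (simp add: algebra_simps)
  also have "\<dots> \<longleftrightarrow> j = cyc_idx n (x - int d)"
    using cyc_idx_eq_iff[OF assms(1), of "int j" "x - int d"] cyc_idx_of_nat[of n j] assms(2) by simp
  finally show ?thesis .
qed

lemma cyc_idx_add:
  assumes "0 < n"
  shows "(cyc_idx n x + d) mod n = cyc_idx n (x + int d)"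
  using mod_add_eq_cyc_idx_iff[OF assms cyc_idx_less[OF assms]] by simp

lemma cyc_idx_mod:
  assumes "0 < n" "d dvd n"
  shows "int (cyc_idx n x mod d) = x mod int d"
proof -
  have "int (cyc_idx n x mod d) = x mod int n mod int d"
    using assms(1) unfolding cyc_idx_def by (simp add: of_nat_mod)
  also have "\<dots> = x mod int d"
    using assms by (simp add: mod_mod_cancel)
  finally show ?thesis .
qed

lemma cyc_idx_in_residue_image:
  assumes "0 < n" "d dvd n"
  shows "(\<exists>i<n. cyc_idx n x = (d * i + c) mod n) \<longleftrightarrow> x mod int d = int c mod int d"
proof
  assume "\<exists>i<n. cyc_idx n x = (d * i + c) mod n"
  then obtain i where "cyc_idx n x = (d * i + c) mod n"
    by blast
  then have "cyc_idx n x mod d = c mod d"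
    using assms(2) by (simp add: mod_mod_cancel)
  then show "x mod int d = int c mod int d"
    using cyc_idx_mod[OF assms] by (metis of_nat_mod)
next
  assume "x mod int d = int c mod int d"
  then have "int d * ((x - int c) div int d) = x - int c"
    by (simp add: mod_eq_dvd_iff)
  define i where "i = cyc_idx n ((x - int c) div int d)"
  have "int i = (x - int c) div int d mod int n"
    using assms(1) unfolding i_def cyc_idx_def by simp
  then have "(int d * int i + int c) mod int n = x mod int n"
    using \<open>int d * ((x - int c) div int d) = x - int c\<close>
    by (metis diff_add_cancel mod_add_left_eq mod_mult_right_eq)
  then have "cyc_idx n x = cyc_idx n (int (d * i + c))"
    using cyc_idx_eq_iff[OF assms(1)] by simp
  then have "cyc_idx n x = (d * i + c) mod n"
    unfolding cyc_idx_of_nat .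
  moreover have "i < n"
    unfolding i_def using cyc_idx_less[OF assms(1)] .
  ultimately show "\<exists>i<n. cyc_idx n x = (d * i + c) mod n"
    by blast
qed

lemma gp_adj_U_iff:
  assumes "0 < n"
  shows "gp_adj n k (U (cyc_idx n x)) c \<longleftrightarrow>
    c = U (cyc_idx n (x - 1)) \<or> c = U (cyc_idx n (x + 1)) \<or> c = V (cyc_idx n x)"
proof -
  let ?i = "cyc_idx n x"
  have "gp_edge n k (U ?i) c \<longleftrightarrow> c = U (cyc_idx n (x + 1)) \<or> c = V ?i"
    using cyc_idx_less[OF assms] cyc_idx_add[OF assms, of x 1]
    unfolding gp_edge_def by auto
  moreover have "gp_edge n k c (U ?i) \<longleftrightarrow> (\<exists>j<n. c = U j \<and> (j + 1) mod n = ?i)"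
    unfolding gp_edge_def by auto
  moreover have "\<dots> \<longleftrightarrow> c = U (cyc_idx n (x - 1))"
    using cyc_idx_less[OF assms] mod_add_eq_cyc_idx_iff[OF assms, of _ 1 x] by auto
  ultimately show ?thesis
    unfolding gp_adj_def by blast
qed

lemma gp_adj_V_iff:
  assumes "0 < n"
  shows "gp_adj n k (V (cyc_idx n x)) c \<longleftrightarrow>
    c = U (cyc_idx n x) \<or> c = V (cyc_idx n (x - int k)) \<or> c = V (cyc_idx n (x + int k))"
proof -
  let ?i = "cyc_idx n x"
  have "gp_edge n k (V ?i) c \<longleftrightarrow> c = V (cyc_idx n (x + int k))"
    using cyc_idx_less[OF assms] cyc_idx_add[OF assms, of x k]
    unfolding gp_edge_def by auto
  moreover have "gp_edge n k c (V ?i) \<longleftrightarrow> c = U ?i \<or> (\<exists>j<n. c = V j \<and> (j + k) mod n = ?i)"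
    using cyc_idx_less[OF assms] unfolding gp_edge_def by auto
  moreover have "\<dots> \<longleftrightarrow> c = U ?i \<or> c = V (cyc_idx n (x - int k))"
    using cyc_idx_less[OF assms] mod_add_eq_cyc_idx_iff[OF assms, of _ k x] by auto
  ultimately show ?thesis
    unfolding gp_adj_def by blast
qed

lemma gp_verts_cyc_idx:
  assumes "0 < n"
  shows "gp_verts n = range (\<lambda>x. U (cyc_idx n x)) \<union> range (\<lambda>x. V (cyc_idx n x))"
  unfolding gp_verts_def using cyc_idx_less[OF assms] cyc_idx_of_nat
  by (auto simp: image_iff) (metis mod_less)+

lemma card_filter_three_eq_1_iff:
  assumes "p \<noteq> q" "p \<noteq> r" "q \<noteq> r"
  shows "card {c \<in> C. c = p \<or> c = q \<or> c = r} = 1 \<longleftrightarrow> exactly_one (p \<in> C) (q \<in> C) (r \<in> C)"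
proof -
  have "{c \<in> C. c = p \<or> c = q \<or> c = r} = {p, q, r} \<inter> C"
    by blast
  also have "\<dots> = (if p \<in> C then {p} else {}) \<union> (if q \<in> C then {q} else {}) \<union> (if r \<in> C then {r} else {})"
    by auto
  finally show ?thesis
    unfolding exactly_one_def using assms by (simp add: card_insert_if)
qed

definition u_in :: "nat \<Rightarrow> gpv set \<Rightarrow> int \<Rightarrow> bool" where
  "u_in n C x \<longleftrightarrow> U (cyc_idx n x) \<in> C"

definition v_in :: "nat \<Rightarrow> gpv set \<Rightarrow> int \<Rightarrow> bool" where
  "v_in n C x \<longleftrightarrow> V (cyc_idx n x) \<in> C"

lemma total_perfect_code_iff_local_tpc:
  assumes "3 \<le> n" "(2 * k) mod n \<noteq> 0"
  shows "total_perfect_code n k C \<longleftrightarrow> C \<subseteq> gp_verts n \<and> local_tpc (int k) (u_in n C) (v_in n C)"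
proof -
  have n: "0 < n"
    using assms(1) by simp
  have U_distinct: "cyc_idx n (x - 1) \<noteq> cyc_idx n (x + 1)" for x
  proof
    assume "cyc_idx n (x - 1) = cyc_idx n (x + 1)"
    then have "int n dvd 2"
      by (simp add: cyc_idx_eq_iff[OF n] mod_eq_dvd_iff)
    with assms(1) show False
      by (auto dest: zdvd_imp_le)
  qed
  have V_distinct: "cyc_idx n (x - int k) \<noteq> cyc_idx n (x + int k)" for x
  proof
    assume "cyc_idx n (x - int k) = cyc_idx n (x + int k)"
    then have "int n dvd int (2 * k)"
      by (simp add: cyc_idx_eq_iff[OF n] mod_eq_dvd_iff)
    with assms(2) show False
      unfolding int_dvd_int_iff by (simp add: dvd_eq_mod_eq_0)
  qed
  have U_card: "card {c \<in> C. gp_adj n k (U (cyc_idx n x)) c} = 1 \<longleftrightarrow>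
      exactly_one (u_in n C (x - 1)) (u_in n C (x + 1)) (v_in n C x)" for x
    unfolding u_in_def v_in_def gp_adj_U_iff[OF n]
    using U_distinct[of x] by (intro card_filter_three_eq_1_iff) simp_all
  have V_card: "card {c \<in> C. gp_adj n k (V (cyc_idx n x)) c} = 1 \<longleftrightarrow>
      exactly_one (u_in n C x) (v_in n C (x - int k)) (v_in n C (x + int k))" for x
    unfolding u_in_def v_in_def gp_adj_V_iff[OF n]
    using V_distinct[of x] by (intro card_filter_three_eq_1_iff) simp_all
  have "(\<forall>v\<in>gp_verts n. card {c \<in> C. gp_adj n k v c} = 1) \<longleftrightarrow>
      (\<forall>x. card {c \<in> C. gp_adj n k (U (cyc_idx n x)) c} = 1) \<and>
      (\<forall>x. card {c \<in> C. gp_adj n k (V (cyc_idx n x)) c} = 1)"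
    unfolding gp_verts_cyc_idx[OF n] by blast
  then show ?thesis
    unfolding total_perfect_code_def local_tpc_def U_card V_card by (rule conj_cong[OF refl])
qed

lemma total_perfect_code_iff_patterns:
  assumes "3 \<le> n" "(2 * k) mod n \<noteq> 0" "C \<subseteq> gp_verts n"
  shows "total_perfect_code n k C \<longleftrightarrow>
    (n mod 3 = 0 \<and> k mod 3 \<noteq> 0 \<and> (\<exists>j<3. u_in n C = pattern3 j \<and> v_in n C = pattern3 j)) \<or>
    (n mod 6 = 0 \<and> (k mod 6 = 1 \<or> k mod 6 = 5) \<and>
      (\<exists>j<6. u_in n C = pattern6 j \<and> v_in n C = pattern6 (j + 3)))"
proof -
  have periodic: "u_in n C (x + int n) = u_in n C x" for x
    using assms(1) unfolding u_in_def by (simp add: cyc_idx_add_int)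
  have mods: "3 dvd int n \<longleftrightarrow> n mod 3 = 0" "6 dvd int n \<longleftrightarrow> n mod 6 = 0"
    "\<not> 3 dvd int k \<longleftrightarrow> k mod 3 \<noteq> 0"
    "6 dvd int k - 1 \<or> 6 dvd int k + 1 \<longleftrightarrow> k mod 6 = 1 \<or> k mod 6 = 5"
    by presburger+
  show ?thesis
    unfolding total_perfect_code_iff_local_tpc[OF assms(1,2)]
      local_tpc_iff[where a = "u_in n C", OF periodic] mods
    using assms(3) by (simp only: simp_thms)
qed

section \<open>The codes \<open>C\<^sub>j\<close> and \<open>C'\<^sub>j\<close>\<close>

lemma mem_code_C_iff:
  "U m \<in> code_C n j \<longleftrightarrow> (\<exists>i<n. m = (3 * i + j) mod n)"
  "V m \<in> code_C n j \<longleftrightarrow> (\<exists>i<n. m = (3 * i + j) mod n)"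
  unfolding code_C_def by auto

lemma mem_code_C'_iff:
  "U m \<in> code_C' n j \<longleftrightarrow> (\<exists>i<n. m = (6 * i + j) mod n) \<or> (\<exists>i<n. m = (6 * i + (j + 1)) mod n)"
  "V m \<in> code_C' n j \<longleftrightarrow> (\<exists>i<n. m = (6 * i + (j + 3)) mod n) \<or> (\<exists>i<n. m = (6 * i + (j + 4)) mod n)"
  unfolding code_C'_def by (auto simp: add.assoc)

lemma u_in_code_C: "0 < n \<Longrightarrow> 3 dvd n \<Longrightarrow> u_in n (code_C n j) = pattern3 j"
  and v_in_code_C: "0 < n \<Longrightarrow> 3 dvd n \<Longrightarrow> v_in n (code_C n j) = pattern3 j"
  unfolding fun_eq_iff u_in_def v_in_def mem_code_C_iff pattern3_def
  by (simp_all add: cyc_idx_in_residue_image mod_eq_dvd_iff)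

lemma u_in_code_C':
  assumes "0 < n" "6 dvd n"
  shows "u_in n (code_C' n j) = pattern6 j"
  unfolding fun_eq_iff u_in_def mem_code_C'_iff cyc_idx_in_residue_image[OF assms] pattern6_def
  by (simp add: mod_eq_dvd_iff algebra_simps)

lemma v_in_code_C':
  assumes "0 < n" "6 dvd n"
  shows "v_in n (code_C' n j) = pattern6 (j + 3)"
  unfolding fun_eq_iff v_in_def mem_code_C'_iff cyc_idx_in_residue_image[OF assms] pattern6_def
  by (simp add: mod_eq_dvd_iff algebra_simps)

lemma U_mem_iff_u_in:
  assumes "C \<subseteq> gp_verts n"
  shows "U m \<in> C \<longleftrightarrow> m < n \<and> u_in n C (int m)"
  using assms unfolding gp_verts_def u_in_def by (auto simp: cyc_idx_of_nat)

lemma V_mem_iff_v_in: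
  assumes "C \<subseteq> gp_verts n"
  shows "V m \<in> C \<longleftrightarrow> m < n \<and> v_in n C (int m)"
  using assms unfolding gp_verts_def v_in_def by (auto simp: cyc_idx_of_nat)

lemma subset_gp_verts_eq_iff:
  assumes "C \<subseteq> gp_verts n" "D \<subseteq> gp_verts n"
  shows "C = D \<longleftrightarrow> u_in n C = u_in n D \<and> v_in n C = v_in n D"
proof
  assume "u_in n C = u_in n D \<and> v_in n C = v_in n D"
  then show "C = D"
    using U_mem_iff_u_in[OF assms(1)] U_mem_iff_u_in[OF assms(2)]
      V_mem_iff_v_in[OF assms(1)] V_mem_iff_v_in[OF assms(2)]
    by (intro set_eqI) (metis gpv.exhaust)
qed simp

lemma code_C_subset: "0 < n \<Longrightarrow> code_C n j \<subseteq> gp_verts n"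
  and code_C'_subset: "0 < n \<Longrightarrow> code_C' n j \<subseteq> gp_verts n"
  unfolding code_C_def code_C'_def gp_verts_def by auto

lemma eq_code_C_iff:
  assumes "0 < n" "3 dvd n" "C \<subseteq> gp_verts n"
  shows "C = code_C n j \<longleftrightarrow> u_in n C = pattern3 j \<and> v_in n C = pattern3 j"
  using assms by (simp add: subset_gp_verts_eq_iff code_C_subset u_in_code_C v_in_code_C)

lemma eq_code_C'_iff:
  assumes "0 < n" "6 dvd n" "C \<subseteq> gp_verts n"
  shows "C = code_C' n j \<longleftrightarrow> u_in n C = pattern6 j \<and> v_in n C = pattern6 (j + 3)"
  using assms by (simp add: subset_gp_verts_eq_iff code_C'_subset u_in_code_C' v_in_code_C')

theorem theorem1p2:
  fixes n k :: nat and C :: "gpv set"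
  assumes "n \<ge> 3" and "0 < k" and "k < n" and "(2 * k) mod n \<noteq> 0"
    and "C \<subseteq> gp_verts n"
  shows "total_perfect_code n k C \<longleftrightarrow>
    ((n mod 3 = 0 \<and> k mod 3 \<noteq> 0 \<and> (\<exists>j<3. C = code_C n j)) \<or>
     (n mod 6 = 0 \<and> (k mod 6 = 1 \<or> k mod 6 = 5) \<and> (\<exists>j<6. C = code_C' n j)))"
proof -
  have n: "0 < n"
    using assms(1) by simp
  have codes3: "(\<exists>j<3. u_in n C = pattern3 j \<and> v_in n C = pattern3 j) \<longleftrightarrow> (\<exists>j<3. C = code_C n j)"
    if "n mod 3 = 0"
  proof -
    have "3 dvd n"
      using that by (simp add: dvd_eq_mod_eq_0)
    then show ?thesis
      by (simp add: eq_code_C_iff[OF n _ assms(5)])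
  qed
  have codes6: "(\<exists>j<6. u_in n C = pattern6 j \<and> v_in n C = pattern6 (j + 3)) \<longleftrightarrow>
      (\<exists>j<6. C = code_C' n j)" if "n mod 6 = 0"
  proof -
    have "6 dvd n"
      using that by (simp add: dvd_eq_mod_eq_0)
    then show ?thesis
      by (simp add: eq_code_C'_iff[OF n _ assms(5)])
  qed
  show ?thesis
    unfolding total_perfect_code_iff_patterns[OF assms(1,4,5)]
    using codes3 codes6 by (intro arg_cong2[where f = "(\<or>)"] conj_cong refl)
qed

end
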